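(* Let $\Omega\subset\mathbb{R}^n$ be a non-empty, bounded, connected, open set with closure $\overline{\Omega}$. Let $J\in C(\overline{\Omega}\times\overline{\Omega})$, let $S\in C^\infty(\mathbb{R})$ have bounded $k$th derivative for every $k\in\{0,1,2,\dots\}$, and let $\tau\in C(\overline{\Omega}\times\overline{\Omega})$ be non-negative and not identically zero. Put $h:=\sup_{\overline{\Omega}\times\overline{\Omega}}\tau$, $Y:=C(\overline{\Omega})$ and $X:=C([-h,0];Y)$ (supremum norms), and define $G:X\to Y$ by $G(\phi)(\mathbf{r})=\int_{\overline{\Omega}}J(\mathbf{r},\mathbf{r}')S(\phi(-\tau(\mathbf{r},\mathbf{r}'),\mathbf{r}'))\,d\mathbf{r}'$. Then $G$ is Fréchet differentiable, and its derivative $DG(\phi)\in\mathcal{L}(X,Y)$ at $\phi\in X$ is given by $$(DG(\phi)\psi)(\mathbf{r})=\int_{\overline{\Omega}}J(\mathbf{r},\mathbf{r}')\,S'\big(\phi(-\tau(\mathbf{r},\mathbf{r}'),\mathbf{r}')\big)\,\psi(-\tau(\mathbf{r},\mathbf{r}'),\mathbf{r}')\,d\mathbf{r}'$$ for all $\psi\in X$ and $\mathbf{r}\in\overline{\Omega}$.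
   Context: For $\phi\in X$ write $\phi(t,\mathbf{r}):=\phi(t)(\mathbf{r})$. $\mathcal{L}(X,Y)$ denotes the bounded linear operators from $X$ to $Y$. *)

theory Defs
  imports "HOL-Analysis.Analysis"
begin

definition supn :: "'b set \<Rightarrow> ('b \<Rightarrow> real) \<Rightarrow> real" where
  "supn K f = (SUP x\<in>K. \<bar>f x\<bar>)"

text \<open>The space Y = C(K) (functions are only relevant on K).\<close>
definition CY :: "'b::topological_space set \<Rightarrow> ('b \<Rightarrow> real) set" where
  "CY K = {f. continuous_on K f}"

definition CX :: "real \<Rightarrow> 'b::topological_space set \<Rightarrow> (real \<Rightarrow> 'b \<Rightarrow> real) set" where
  "CX h K = {\<phi>. (\<forall>t\<in>{-h..0}. \<phi> t \<in> CY K) \<and>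
     (\<forall>t0\<in>{-h..0}. \<forall>e>0. \<exists>d>0. \<forall>t\<in>{-h..0}. \<bar>t - t0\<bar> < d \<longrightarrow>
        supn K (\<lambda>r. \<phi> t r - \<phi> t0 r) < e)}"

definition normX :: "real \<Rightarrow> 'b set \<Rightarrow> (real \<Rightarrow> 'b \<Rightarrow> real) \<Rightarrow> real" where
  "normX h K \<phi> = (SUP t\<in>{-h..0}. supn K (\<phi> t))"

definition bounded_linear_XY ::
  "real \<Rightarrow> 'b::topological_space set \<Rightarrow> ((real \<Rightarrow> 'b \<Rightarrow> real) \<Rightarrow> 'b \<Rightarrow> real) \<Rightarrow> bool" where
  "bounded_linear_XY h K L \<longleftrightarrow>
     (\<forall>\<psi>\<in>CX h K. L \<psi> \<in> CY K) \<and>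
     (\<forall>\<psi>1\<in>CX h K. \<forall>\<psi>2\<in>CX h K. \<forall>c::real. \<forall>r\<in>K.
        L (\<lambda>t x. c * \<psi>1 t x + \<psi>2 t x) r = c * L \<psi>1 r + L \<psi>2 r) \<and>
     (\<exists>C. \<forall>\<psi>\<in>CX h K. supn K (L \<psi>) \<le> C * normX h K \<psi>)"

definition frechet_deriv_XY ::
  "real \<Rightarrow> 'b::topological_space set \<Rightarrow> ((real \<Rightarrow> 'b \<Rightarrow> real) \<Rightarrow> 'b \<Rightarrow> real)
     \<Rightarrow> ((real \<Rightarrow> 'b \<Rightarrow> real) \<Rightarrow> 'b \<Rightarrow> real) \<Rightarrow> (real \<Rightarrow> 'b \<Rightarrow> real) \<Rightarrow> bool" where
  "frechet_deriv_XY h K G L \<phi> \<longleftrightarrow>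
     bounded_linear_XY h K L \<and>
     (\<forall>e>0. \<exists>d>0. \<forall>\<psi>\<in>CX h K. 0 < normX h K \<psi> \<and> normX h K \<psi> < d \<longrightarrow>
        supn K (\<lambda>r. G (\<lambda>t x. \<phi> t x + \<psi> t x) r - G \<phi> r - L \<psi> r) \<le> e * normX h K \<psi>)"

definition nfG :: "('b::euclidean_space \<Rightarrow> 'b \<Rightarrow> real) \<Rightarrow> (real \<Rightarrow> real) \<Rightarrow> ('b \<Rightarrow> 'b \<Rightarrow> real)
     \<Rightarrow> 'b set \<Rightarrow> (real \<Rightarrow> 'b \<Rightarrow> real) \<Rightarrow> 'b \<Rightarrow> real" where
  "nfG J S \<tau> K \<phi> r = integral K (\<lambda>r'. J r r' * S (\<phi> (- \<tau> r r') r'))"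

definition nfDG :: "('b::euclidean_space \<Rightarrow> 'b \<Rightarrow> real) \<Rightarrow> (real \<Rightarrow> real) \<Rightarrow> ('b \<Rightarrow> 'b \<Rightarrow> real)
     \<Rightarrow> 'b set \<Rightarrow> (real \<Rightarrow> 'b \<Rightarrow> real) \<Rightarrow> (real \<Rightarrow> 'b \<Rightarrow> real) \<Rightarrow> 'b \<Rightarrow> real" where
  "nfDG J S \<tau> K \<phi> \<psi> r =
     integral K (\<lambda>r'. J r r' * deriv S (\<phi> (- \<tau> r r') r') * \<psi> (- \<tau> r r') r')"

end

theory Submission
  imports Defs
begin

text \<open>
  Put a(r') = phi(-tau(r,r'), r') and b(r') = psi(-tau(r,r'), r'). The Frechet remainder
  G(phi+psi)(r) - G(phi)(r) - (DG(phi) psi)(r) is the integral of J(r,r') (S(a+b) - S(a) - S'(a) b),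
  so Taylor's theorem bounds it by sup|J| sup|S''| |closure Omega| ||psi||^2: it is quadratic in psi.
  Everything else comes from joint continuity: every element of X is continuous on
  [-h,0] x closure Omega, hence all integrands are (uniformly) continuous on the compact set
  closure Omega x closure Omega.
\<close>

lemma integrable_on_compact_continuous:
  fixes f :: "'a::euclidean_space \<Rightarrow> real"
  assumes "compact S" "continuous_on S f"
  shows "f integrable_on S"
proof -
  have "(\<lambda>x. indicator S x *\<^sub>R f x) integrable_on UNIV"
    by (rule integrable_on_lborel[OF borel_integrable_compact[OF assms]])
  moreover have "(\<lambda>x. indicator S x *\<^sub>R f x) = (\<lambda>x. if x \<in> S then f x else 0)"
    by (auto simp: indicator_def fun_eq_iff)
  ultimately show ?thesis by (simp add: integrable_restrict_UNIV)
qed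

lemma abs_integral_le_measure:
  fixes f :: "'a::euclidean_space \<Rightarrow> real"
  assumes "S \<in> lmeasurable" "f integrable_on S" "\<And>x. x \<in> S \<Longrightarrow> \<bar>f x\<bar> \<le> B"
  shows "\<bar>integral S f\<bar> \<le> B * measure lebesgue S"
proof -
  have "norm (integral S f) \<le> integral S (\<lambda>_. B)"
    by (rule integral_norm_bound_integral) (use assms integrable_on_const in auto)
  also have "\<dots> = B * measure lebesgue S"
    using lmeasure_integral[OF assms(1)] integral_mult_right[of S B "\<lambda>_. 1::real"] by simp
  finally show ?thesis by simp
qed

lemma integrable_on_slice:
  fixes F :: "'a::euclidean_space \<Rightarrow> 'b::euclidean_space \<Rightarrow> real"
  assumes "compact K" "continuous_on (A \<times> K) (\<lambda>(r, r'). F r r')" "r \<in> A"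
  shows "F r integrable_on K"
proof -
  have "continuous_on K ((\<lambda>(r, r'). F r r') \<circ> Pair r)"
    using assms(3) by (intro continuous_on_compose continuous_on_subset[OF assms(2)])
      (auto intro!: continuous_intros)
  then show ?thesis
    by (simp add: o_def integrable_on_compact_continuous[OF assms(1)])
qed

lemma continuous_on_parametric_integral:
  fixes F :: "'a::euclidean_space \<Rightarrow> 'b::euclidean_space \<Rightarrow> real"
  assumes "compact A" "compact K" "continuous_on (A \<times> K) (\<lambda>(r, r'). F r r')"
  shows "continuous_on A (\<lambda>r. integral K (F r))"
  unfolding continuous_on_iff
proof (intro ballI allI impI)
  fix r0 and e :: real assume r0: "r0 \<in> A" and e: "0 < e"
  define \<mu> where "\<mu> = measure lebesgue K"
  have "\<mu> \<ge> 0" by (simp add: \<mu>_def)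
  have "uniformly_continuous_on (A \<times> K) (\<lambda>(r, r'). F r r')"
    using assms by (intro compact_uniformly_continuous compact_Times)
  moreover have "e / (\<mu> + 1) > 0"
    using \<open>\<mu> \<ge> 0\<close> e by simp
  ultimately obtain d where "d > 0" and d: "\<And>p q. p \<in> A \<times> K \<Longrightarrow> q \<in> A \<times> K \<Longrightarrow> dist q p < d \<Longrightarrow>
      dist ((\<lambda>(r, r'). F r r') q) ((\<lambda>(r, r'). F r r') p) < e / (\<mu> + 1)"
    by (rule uniformly_continuous_onE) blast
  show "\<exists>d>0. \<forall>r\<in>A. dist r r0 < d \<longrightarrow> dist (integral K (F r)) (integral K (F r0)) < e"
  proof (intro exI[of _ d] conjI ballI impI)
    fix r assume r: "r \<in> A" "dist r r0 < d"
    have int: "F r integrable_on K" "F r0 integrable_on K"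
      using integrable_on_slice[OF assms(2,3)] r(1) r0 by blast+
    have "\<bar>integral K (\<lambda>r'. F r r' - F r0 r')\<bar> \<le> e / (\<mu> + 1) * \<mu>"
    proof (rule abs_integral_le_measure[where S = K and B = "e / (\<mu> + 1)", folded \<mu>_def])
      fix x assume "x \<in> K"
      then show "\<bar>F r x - F r0 x\<bar> \<le> e / (\<mu> + 1)"
        using d[of "(r0, x)" "(r, x)"] r r0 by (simp add: dist_Pair_Pair dist_real_def)
    qed (rule lmeasurable_compact[OF assms(2)], rule integrable_diff[OF int])
    also have "\<dots> < e"
      using e \<open>\<mu> \<ge> 0\<close> by (simp add: field_simps)
    finally show "dist (integral K (F r)) (integral K (F r0)) < e"
      using int by (simp add: dist_real_def integral_diff)
  qed (fact \<open>d > 0\<close>)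
qed

lemma abs_taylor_remainder_le:
  fixes f :: "real \<Rightarrow> real"
  assumes f': "\<And>x. (f has_real_derivative f' x) (at x)"
    and f'': "\<And>x. (f' has_real_derivative f'' x) (at x)"
    and bound: "\<And>x. \<bar>f'' x\<bar> \<le> M"
  shows "\<bar>f (a + b) - f a - f' a * b\<bar> \<le> M * b\<^sup>2"
proof -
  have lipschitz: "norm (f' x - f' a) \<le> M * norm (x - a)" for x
    by (rule field_differentiable_bound[of UNIV f' f''], simp_all add: f'' bound)
  define g where "g x = f x - f' a * x" for x
  have g': "(g has_real_derivative f' x - f' a) (at x)" for x
    unfolding g_def by (rule derivative_eq_intros f' refl | simp)+
  have "norm (g (a + b) - g a) \<le> (M * \<bar>b\<bar>) * norm (a + b - a)"
  proof (rule field_differentiable_bound[where S = "closed_segment a (a + b)"])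
    fix x assume x: "x \<in> closed_segment a (a + b)"
    show "(g has_field_derivative f' x - f' a) (at x within closed_segment a (a + b))"
      by (rule has_field_derivative_at_within[OF g'])
    have "norm (x - a) \<le> \<bar>b\<bar>"
      using dist_in_closed_segment[OF x] by (simp add: dist_norm)
    then have "M * norm (x - a) \<le> M * \<bar>b\<bar>"
      using abs_ge_zero[of "f'' x"] bound[of x] by (intro mult_left_mono) linarith+
    then show "norm (f' x - f' a) \<le> M * \<bar>b\<bar>"
      using lipschitz[of x] by linarith
  qed auto
  moreover have "g (a + b) - g a = f (a + b) - f a - f' a * b"
    by (simp add: g_def algebra_simps)
  ultimately show ?thesis
    by (simp add: power2_eq_square mult.assoc abs_mult_self_eq)
qed

lemma abs_le_supn:
  assumes "compact K" "continuous_on K f" "x \<in> K"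
  shows "\<bar>f x\<bar> \<le> supn K f"
proof -
  obtain B where "\<And>y. y \<in> K \<Longrightarrow> norm (f y) \<le> B"
    using continuous_on_compact_bound[OF assms(1,2)] by blast
  then have "bdd_above ((\<lambda>y. \<bar>f y\<bar>) ` K)"
    by (intro bdd_aboveI2[of _ _ B]) auto
  then show ?thesis
    unfolding supn_def by (rule cSUP_upper[OF assms(3)])
qed

lemma supn_le:
  assumes "K \<noteq> {}" "\<And>x. x \<in> K \<Longrightarrow> \<bar>f x\<bar> \<le> B"
  shows "supn K f \<le> B"
  unfolding supn_def using assms by (intro cSUP_least) auto

lemma continuous_on_CX_uncurried:
  fixes K :: "'a::metric_space set"
  assumes "\<psi> \<in> CX h K" "compact K"
  shows "continuous_on ({-h..0} \<times> K) (\<lambda>(t, x). \<psi> t x)"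
  unfolding continuous_on_iff
proof (intro ballI allI impI)
  fix p and e :: real
  assume "p \<in> {-h..0} \<times> K" and "0 < e"
  then obtain t0 x0 where p: "p = (t0, x0)" "t0 \<in> {-h..0}" "x0 \<in> K"
    by auto
  have slices: "\<And>t. t \<in> {-h..0} \<Longrightarrow> continuous_on K (\<psi> t)"
    using assms(1) by (simp add: CX_def CY_def)
  have "\<exists>d>0. \<forall>t\<in>{-h..0}. \<bar>t - t0\<bar> < d \<longrightarrow> supn K (\<lambda>r. \<psi> t r - \<psi> t0 r) < e / 2"
    using assms(1) p(2) half_gt_zero[OF \<open>0 < e\<close>] unfolding CX_def by blast
  then obtain d1 where "d1 > 0" and d1: "\<And>t. t \<in> {-h..0} \<Longrightarrow> \<bar>t - t0\<bar> < d1 \<Longrightarrow>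
      supn K (\<lambda>r. \<psi> t r - \<psi> t0 r) < e / 2"
    by blast
  have "\<exists>d>0. \<forall>x\<in>K. dist x x0 < d \<longrightarrow> dist (\<psi> t0 x) (\<psi> t0 x0) < e / 2"
    using slices[OF p(2)] p(3) half_gt_zero[OF \<open>0 < e\<close>] unfolding continuous_on_iff by blast
  then obtain d2 where "d2 > 0" and d2: "\<And>x. x \<in> K \<Longrightarrow> dist x x0 < d2 \<Longrightarrow>
      dist (\<psi> t0 x) (\<psi> t0 x0) < e / 2"
    by blast
  show "\<exists>d>0. \<forall>q\<in>{-h..0} \<times> K. dist q p < d \<longrightarrow>
      dist ((\<lambda>(t, x). \<psi> t x) q) ((\<lambda>(t, x). \<psi> t x) p) < e"
  proof (intro exI[of _ "min d1 d2"] conjI ballI impI)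
    show "min d1 d2 > 0"
      using \<open>d1 > 0\<close> \<open>d2 > 0\<close> by simp
    fix q assume "q \<in> {-h..0} \<times> K" and close: "dist q p < min d1 d2"
    then obtain t x where q: "q = (t, x)" "t \<in> {-h..0}" "x \<in> K"
      by auto
    have "\<bar>\<psi> t x - \<psi> t0 x\<bar> \<le> supn K (\<lambda>r. \<psi> t r - \<psi> t0 r)"
      using slices q p by (intro abs_le_supn assms(2) continuous_on_diff) auto
    also have "\<dots> < e / 2"
      using d1[OF q(2)] dist_fst_le[of q p] close q p by (simp add: dist_real_def)
    finally have "\<bar>\<psi> t x - \<psi> t0 x\<bar> < e / 2" .
    moreover have "dist (\<psi> t0 x) (\<psi> t0 x0) < e / 2"
      using d2[OF q(3)] dist_snd_le[of q p] close q p by simp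
    ultimately show "dist ((\<lambda>(t, x). \<psi> t x) q) ((\<lambda>(t, x). \<psi> t x) p) < e"
      using q p abs_triangle_ineq[of "\<psi> t x - \<psi> t0 x" "\<psi> t0 x - \<psi> t0 x0"]
      by (simp add: dist_real_def)
  qed
qed

lemma abs_le_normX:
  fixes K :: "'a::metric_space set"
  assumes "\<psi> \<in> CX h K" "compact K" "t \<in> {-h..0}" "x \<in> K"
  shows "\<bar>\<psi> t x\<bar> \<le> normX h K \<psi>"
proof -
  obtain B where B: "\<And>p. p \<in> {-h..0} \<times> K \<Longrightarrow> norm ((\<lambda>(t, x). \<psi> t x) p) \<le> B"
    using continuous_on_compact_bound[OF _ continuous_on_CX_uncurried[OF assms(1,2)]] assms(2)
    by (metis compact_Icc compact_Times)
  have "supn K (\<psi> s) \<le> B" if "s \<in> {-h..0}" for s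
    using B that assms(4) by (intro supn_le) auto
  then have bdd: "bdd_above ((\<lambda>s. supn K (\<psi> s)) ` {-h..0})"
    by (intro bdd_aboveI2[of _ _ B])
  have "\<bar>\<psi> t x\<bar> \<le> supn K (\<psi> t)"
    using assms(1,3,4) by (intro abs_le_supn assms(2)) (auto simp: CX_def CY_def)
  also have "\<dots> \<le> normX h K \<psi>"
    unfolding normX_def by (rule cSUP_upper[OF assms(3) bdd])
  finally show ?thesis .
qed

lemma frechet_deriv_XY_if_quadratic_remainder:
  assumes "bounded_linear_XY h K L"
    and remainder: "\<And>\<psi>. \<psi> \<in> CX h K \<Longrightarrow>
      supn K (\<lambda>r. G (\<lambda>t x. \<phi> t x + \<psi> t x) r - G \<phi> r - L \<psi> r) \<le> C * (normX h K \<psi>)\<^sup>2"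
  shows "frechet_deriv_XY h K G L \<phi>"
  unfolding frechet_deriv_XY_def
proof (intro conjI assms(1) allI impI)
  fix e :: real assume "0 < e"
  show "\<exists>d>0. \<forall>\<psi>\<in>CX h K. 0 < normX h K \<psi> \<and> normX h K \<psi> < d \<longrightarrow>
      supn K (\<lambda>r. G (\<lambda>t x. \<phi> t x + \<psi> t x) r - G \<phi> r - L \<psi> r) \<le> e * normX h K \<psi>"
  proof (intro exI[of _ "e / (\<bar>C\<bar> + 1)"] conjI ballI impI)
    show "0 < e / (\<bar>C\<bar> + 1)"
      using \<open>0 < e\<close> by (simp add: add_nonneg_pos)
    fix \<psi> assume "\<psi> \<in> CX h K" and small: "0 < normX h K \<psi> \<and> normX h K \<psi> < e / (\<bar>C\<bar> + 1)"
    define N where "N = normX h K \<psi>"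
    have "N > 0" and "(\<bar>C\<bar> + 1) * N < e"
      using small by (simp_all add: N_def pos_less_divide_eq mult.commute add_nonneg_pos)
    have "C * N\<^sup>2 \<le> (\<bar>C\<bar> + 1) * N * N"
      by (simp add: power2_eq_square mult.assoc mult_right_mono)
    also have "\<dots> \<le> e * N"
      using \<open>N > 0\<close> \<open>(\<bar>C\<bar> + 1) * N < e\<close> by (simp add: mult_right_mono)
    finally show "supn K (\<lambda>r. G (\<lambda>t x. \<phi> t x + \<psi> t x) r - G \<phi> r - L \<psi> r) \<le> e * normX h K \<psi>"
      using remainder[OF \<open>\<psi> \<in> CX h K\<close>] by (simp add: N_def)
  qed
qed

locale delay_integral_operator =
  fixes K :: "'a::euclidean_space set" and h :: real
    and J \<tau> :: "'a \<Rightarrow> 'a \<Rightarrow> real" and S :: "real \<Rightarrow> real"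
  assumes compact: "compact K" and nonempty: "K \<noteq> {}"
    and J_continuous: "continuous_on (K \<times> K) (\<lambda>(r, r'). J r r')"
    and \<tau>_continuous: "continuous_on (K \<times> K) (\<lambda>(r, r'). \<tau> r r')"
    and \<tau>_range: "\<And>r r'. r \<in> K \<Longrightarrow> r' \<in> K \<Longrightarrow> \<tau> r r' \<in> {0..h}"
    and S_deriv: "\<And>x. (S has_real_derivative deriv S x) (at x)"
    and S'_deriv: "\<And>x. (deriv S has_real_derivative deriv (deriv S) x) (at x)"
    and S''_bounded: "bounded (range (deriv (deriv S)))"
begin

lemma continuous_on_delayed:
  assumes "\<xi> \<in> CX h K"
  shows "continuous_on (K \<times> K) (\<lambda>(r, r'). \<xi> (- \<tau> r r') r')"
proof -
  have "continuous_on (K \<times> K) ((\<lambda>(t, x). \<xi> t x) \<circ> (\<lambda>(r, r'). (- \<tau> r r', r')))"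
  proof (rule continuous_on_compose)
    show "continuous_on (K \<times> K) (\<lambda>(r, r'). (- \<tau> r r', r'))"
      unfolding case_prod_unfold
      by (intro continuous_on_Pair continuous_on_minus \<tau>_continuous[unfolded case_prod_unfold]
          continuous_on_snd continuous_on_id)
    show "continuous_on ((\<lambda>(r, r'). (- \<tau> r r', r')) ` (K \<times> K)) (\<lambda>(t, x). \<xi> t x)"
    proof (rule continuous_on_subset[OF continuous_on_CX_uncurried[OF assms compact]], rule image_subsetI)
      fix p assume "p \<in> K \<times> K"
      then show "(\<lambda>(r, r'). (- \<tau> r r', r')) p \<in> {-h..0} \<times> K"
        using \<tau>_range by (cases p) force
    qed
  qed
  then show ?thesis
    by (simp add: o_def case_prod_unfold)
qed

lemma abs_delayed_le_normX:
  assumes "\<xi> \<in> CX h K" "r \<in> K" "r' \<in> K"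
  shows "\<bar>\<xi> (- \<tau> r r') r'\<bar> \<le> normX h K \<xi>"
  using \<tau>_range[OF assms(2,3)] by (intro abs_le_normX[OF assms(1) compact] assms(3)) auto

lemma continuous_on_nfG_integrand:
  assumes "continuous_on (K \<times> K) (\<lambda>(r, r'). \<xi> (- \<tau> r r') r')"
  shows "continuous_on (K \<times> K) (\<lambda>(r, r'). J r r' * S (\<xi> (- \<tau> r r') r'))"
proof -
  have "continuous_on UNIV S"
    using S_deriv by (intro continuous_at_imp_continuous_on) (auto intro: DERIV_isCont)
  then have "continuous_on (K \<times> K) (\<lambda>p. (\<lambda>(r, r'). J r r') p * S ((\<lambda>(r, r'). \<xi> (- \<tau> r r') r') p))"
    by (intro continuous_on_mult J_continuous continuous_on_compose2[OF _ assms]) auto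
  then show ?thesis
    by (simp add: case_prod_unfold)
qed

lemma continuous_on_nfDG_kernel:
  assumes "\<phi> \<in> CX h K"
  shows "continuous_on (K \<times> K) (\<lambda>(r, r'). J r r' * deriv S (\<phi> (- \<tau> r r') r'))"
proof -
  have "continuous_on UNIV (deriv S)"
    using S'_deriv by (intro continuous_at_imp_continuous_on) (auto intro: DERIV_isCont)
  then have "continuous_on (K \<times> K)
      (\<lambda>p. (\<lambda>(r, r'). J r r') p * deriv S ((\<lambda>(r, r'). \<phi> (- \<tau> r r') r') p))"
    by (intro continuous_on_mult J_continuous
        continuous_on_compose2[OF _ continuous_on_delayed[OF assms]]) auto
  then show ?thesis
    by (simp add: case_prod_unfold)
qed

lemma continuous_on_nfDG_integrand:
  assumes "\<phi> \<in> CX h K" "\<psi> \<in> CX h K"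
  shows "continuous_on (K \<times> K)
    (\<lambda>(r, r'). J r r' * deriv S (\<phi> (- \<tau> r r') r') * \<psi> (- \<tau> r r') r')"
  using continuous_on_mult[OF continuous_on_nfDG_kernel[OF assms(1)] continuous_on_delayed[OF assms(2)]]
  by (simp add: case_prod_unfold)

lemma nfG_in_CY:
  assumes "\<phi> \<in> CX h K"
  shows "nfG J S \<tau> K \<phi> \<in> CY K"
  using continuous_on_parametric_integral[OF compact compact
      continuous_on_nfG_integrand[OF continuous_on_delayed[OF assms]]]
  by (simp add: CY_def nfG_def[abs_def])

lemma nfDG_integrable:
  assumes "\<phi> \<in> CX h K" "\<psi> \<in> CX h K" "r \<in> K"
  shows "(\<lambda>r'. J r r' * deriv S (\<phi> (- \<tau> r r') r') * \<psi> (- \<tau> r r') r') integrable_on K"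
  using integrable_on_slice[OF compact continuous_on_nfDG_integrand[OF assms(1,2)] assms(3)]
  by simp

lemma nfDG_in_CY:
  assumes "\<phi> \<in> CX h K" "\<psi> \<in> CX h K"
  shows "nfDG J S \<tau> K \<phi> \<psi> \<in> CY K"
  using continuous_on_parametric_integral[OF compact compact continuous_on_nfDG_integrand[OF assms]]
  by (simp add: CY_def nfDG_def[abs_def])

lemma nfDG_linear:
  assumes "\<phi> \<in> CX h K" "\<psi>1 \<in> CX h K" "\<psi>2 \<in> CX h K" "r \<in> K"
  shows "nfDG J S \<tau> K \<phi> (\<lambda>t x. c * \<psi>1 t x + \<psi>2 t x) r
    = c * nfDG J S \<tau> K \<phi> \<psi>1 r + nfDG J S \<tau> K \<phi> \<psi>2 r"
proof -
  have "nfDG J S \<tau> K \<phi> (\<lambda>t x. c * \<psi>1 t x + \<psi>2 t x) r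
      = integral K (\<lambda>r'. c * (J r r' * deriv S (\<phi> (- \<tau> r r') r') * \<psi>1 (- \<tau> r r') r')
          + J r r' * deriv S (\<phi> (- \<tau> r r') r') * \<psi>2 (- \<tau> r r') r')"
    by (simp add: nfDG_def algebra_simps)
  also have "\<dots> = c * nfDG J S \<tau> K \<phi> \<psi>1 r + nfDG J S \<tau> K \<phi> \<psi>2 r"
    using integral_add[OF integrable_on_cmult_left[OF nfDG_integrable[OF assms(1,2,4)]]
        nfDG_integrable[OF assms(1,3,4)]]
    by (simp add: nfDG_def)
  finally show ?thesis .
qed

lemma nfDG_bounded:
  assumes "\<phi> \<in> CX h K"
  obtains C where "\<And>\<psi>. \<psi> \<in> CX h K \<Longrightarrow> supn K (nfDG J S \<tau> K \<phi> \<psi>) \<le> C * normX h K \<psi>"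
proof -
  obtain M where "M \<ge> 0" and M: "\<And>p. p \<in> K \<times> K \<Longrightarrow>
      norm ((\<lambda>(r, r'). J r r' * deriv S (\<phi> (- \<tau> r r') r')) p) \<le> M"
    using continuous_on_compact_bound[OF compact_Times[OF compact compact]
        continuous_on_nfDG_kernel[OF assms]] by blast
  show ?thesis
  proof (rule that[of "M * measure lebesgue K"])
    fix \<psi> assume \<psi>: "\<psi> \<in> CX h K"
    have "\<bar>nfDG J S \<tau> K \<phi> \<psi> r\<bar> \<le> M * normX h K \<psi> * measure lebesgue K" if "r \<in> K" for r
      unfolding nfDG_def
    proof (rule abs_integral_le_measure[OF lmeasurable_compact[OF compact]
          nfDG_integrable[OF assms \<psi> that]])
      fix r' assume "r' \<in> K"
      have "\<bar>J r r' * deriv S (\<phi> (- \<tau> r r') r')\<bar> \<le> M"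
        using M[of "(r, r')"] \<open>r \<in> K\<close> \<open>r' \<in> K\<close> by simp
      then show "\<bar>J r r' * deriv S (\<phi> (- \<tau> r r') r') * \<psi> (- \<tau> r r') r'\<bar> \<le> M * normX h K \<psi>"
        unfolding abs_mult[of "J r r' * _"] using \<open>M \<ge> 0\<close> \<open>r \<in> K\<close> \<open>r' \<in> K\<close>
        by (intro mult_mono abs_delayed_le_normX[OF \<psi>]) auto
    qed
    then show "supn K (nfDG J S \<tau> K \<phi> \<psi>) \<le> M * measure lebesgue K * normX h K \<psi>"
      by (intro supn_le nonempty) (simp add: algebra_simps)
  qed
qed

lemma nfDG_bounded_linear:
  assumes "\<phi> \<in> CX h K"
  shows "bounded_linear_XY h K (nfDG J S \<tau> K \<phi>)"
proof -
  obtain C where "\<And>\<psi>. \<psi> \<in> CX h K \<Longrightarrow> supn K (nfDG J S \<tau> K \<phi> \<psi>) \<le> C * normX h K \<psi>"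
    using nfDG_bounded[OF assms] by blast
  then show ?thesis
    unfolding bounded_linear_XY_def
    by (intro conjI ballI allI exI[of _ C] nfDG_in_CY[OF assms] nfDG_linear[OF assms])
qed

lemma nfG_remainder_integral:
  assumes \<phi>: "\<phi> \<in> CX h K" and \<psi>: "\<psi> \<in> CX h K" and "r \<in> K"
  defines "a \<equiv> \<lambda>r'. \<phi> (- \<tau> r r') r'" and "b \<equiv> \<lambda>r'. \<psi> (- \<tau> r r') r'"
  shows "(\<lambda>r'. J r r' * (S (a r' + b r') - S (a r') - deriv S (a r') * b r')) integrable_on K"
    and "nfG J S \<tau> K (\<lambda>t x. \<phi> t x + \<psi> t x) r - nfG J S \<tau> K \<phi> r - nfDG J S \<tau> K \<phi> \<psi> r
      = integral K (\<lambda>r'. J r r' * (S (a r' + b r') - S (a r') - deriv S (a r') * b r'))"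
proof -
  have "continuous_on (K \<times> K) (\<lambda>(r, r'). \<phi> (- \<tau> r r') r' + \<psi> (- \<tau> r r') r')"
    using continuous_on_add[OF continuous_on_delayed[OF \<phi>] continuous_on_delayed[OF \<psi>]]
    by (simp add: case_prod_unfold)
  from integrable_on_slice[OF compact continuous_on_nfG_integrand[OF this] \<open>r \<in> K\<close>]
  have i1: "(\<lambda>r'. J r r' * S (a r' + b r')) integrable_on K"
    by (simp add: a_def b_def)
  have i2: "(\<lambda>r'. J r r' * S (a r')) integrable_on K"
    using integrable_on_slice[OF compact continuous_on_nfG_integrand[OF continuous_on_delayed[OF \<phi>]]
        \<open>r \<in> K\<close>]
    by (simp add: a_def)
  have i3: "(\<lambda>r'. J r r' * deriv S (a r') * b r') integrable_on K"
    using integrable_on_slice[OF compact continuous_on_nfDG_integrand[OF \<phi> \<psi>] \<open>r \<in> K\<close>]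
    by (simp add: a_def b_def)
  have distrib: "(\<lambda>r'. J r r' * (S (a r' + b r') - S (a r') - deriv S (a r') * b r'))
      = (\<lambda>r'. J r r' * S (a r' + b r') - J r r' * S (a r') - J r r' * deriv S (a r') * b r')"
    by (simp add: algebra_simps)
  show "(\<lambda>r'. J r r' * (S (a r' + b r') - S (a r') - deriv S (a r') * b r')) integrable_on K"
    unfolding distrib using i1 i2 i3 by (intro integrable_diff)
  show "nfG J S \<tau> K (\<lambda>t x. \<phi> t x + \<psi> t x) r - nfG J S \<tau> K \<phi> r - nfDG J S \<tau> K \<phi> \<psi> r
      = integral K (\<lambda>r'. J r r' * (S (a r' + b r') - S (a r') - deriv S (a r') * b r'))"
    unfolding distrib using i1 i2 i3
    by (simp add: nfG_def nfDG_def a_def b_def integral_diff integrable_diff)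
qed

lemma nfG_remainder_quadratic:
  obtains C where "\<And>\<phi> \<psi>. \<phi> \<in> CX h K \<Longrightarrow> \<psi> \<in> CX h K \<Longrightarrow>
    supn K (\<lambda>r. nfG J S \<tau> K (\<lambda>t x. \<phi> t x + \<psi> t x) r - nfG J S \<tau> K \<phi> r - nfDG J S \<tau> K \<phi> \<psi> r)
      \<le> C * (normX h K \<psi>)\<^sup>2"
proof -
  obtain MJ where "MJ \<ge> 0" and MJ: "\<And>p. p \<in> K \<times> K \<Longrightarrow> norm ((\<lambda>(r, r'). J r r') p) \<le> MJ"
    using continuous_on_compact_bound[OF compact_Times[OF compact compact] J_continuous] by blast
  obtain M2 where M2: "\<And>x. \<bar>deriv (deriv S) x\<bar> \<le> M2"
    using S''_bounded by (auto simp: bounded_iff)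
  have "M2 \<ge> 0"
    using abs_ge_zero[of "deriv (deriv S) 0"] M2[of 0] by linarith
  show ?thesis
  proof (rule that[of "MJ * M2 * measure lebesgue K"])
    fix \<phi> \<psi> assume \<phi>: "\<phi> \<in> CX h K" and \<psi>: "\<psi> \<in> CX h K"
    define N where "N = normX h K \<psi>"
    have "\<bar>nfG J S \<tau> K (\<lambda>t x. \<phi> t x + \<psi> t x) r - nfG J S \<tau> K \<phi> r - nfDG J S \<tau> K \<phi> \<psi> r\<bar>
        \<le> MJ * (M2 * N\<^sup>2) * measure lebesgue K" if "r \<in> K" for r
      unfolding nfG_remainder_integral(2)[OF \<phi> \<psi> \<open>r \<in> K\<close>]
    proof (rule abs_integral_le_measure[OF lmeasurable_compact[OF compact]
          nfG_remainder_integral(1)[OF \<phi> \<psi> \<open>r \<in> K\<close>]])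
      fix r' assume "r' \<in> K"
      define a where "a = \<phi> (- \<tau> r r') r'"
      define b where "b = \<psi> (- \<tau> r r') r'"
      have "\<bar>b\<bar> \<le> N"
        unfolding b_def N_def using \<open>r \<in> K\<close> \<open>r' \<in> K\<close> by (rule abs_delayed_le_normX[OF \<psi>])
      then have "b\<^sup>2 \<le> N\<^sup>2"
        using power_mono[of "\<bar>b\<bar>" N 2] by simp
      then have "\<bar>S (a + b) - S a - deriv S a * b\<bar> \<le> M2 * N\<^sup>2"
        using abs_taylor_remainder_le[OF S_deriv S'_deriv M2, of a b] \<open>M2 \<ge> 0\<close>
        by (meson mult_left_mono order_trans)
      moreover have "\<bar>J r r'\<bar> \<le> MJ"
        using MJ[of "(r, r')"] \<open>r \<in> K\<close> \<open>r' \<in> K\<close> by simp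
      ultimately show "\<bar>J r r' * (S (a + b) - S a - deriv S a * b)\<bar> \<le> MJ * (M2 * N\<^sup>2)"
        unfolding abs_mult using \<open>MJ \<ge> 0\<close> by (intro mult_mono) auto
    qed
    then show "supn K (\<lambda>r. nfG J S \<tau> K (\<lambda>t x. \<phi> t x + \<psi> t x) r - nfG J S \<tau> K \<phi> r
        - nfDG J S \<tau> K \<phi> \<psi> r) \<le> MJ * M2 * measure lebesgue K * (normX h K \<psi>)\<^sup>2"
      by (intro supn_le nonempty) (simp add: N_def algebra_simps)
  qed
qed

lemma nfG_frechet_deriv:
  assumes "\<phi> \<in> CX h K"
  shows "frechet_deriv_XY h K (nfG J S \<tau> K) (nfDG J S \<tau> K \<phi>) \<phi>"
proof -
  obtain C where C: "\<And>\<phi> \<psi>. \<phi> \<in> CX h K \<Longrightarrow> \<psi> \<in> CX h K \<Longrightarrow>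
    supn K (\<lambda>r. nfG J S \<tau> K (\<lambda>t x. \<phi> t x + \<psi> t x) r - nfG J S \<tau> K \<phi> r - nfDG J S \<tau> K \<phi> \<psi> r)
      \<le> C * (normX h K \<psi>)\<^sup>2"
    using nfG_remainder_quadratic by blast
  show ?thesis
    by (rule frechet_deriv_XY_if_quadratic_remainder[OF nfDG_bounded_linear[OF assms] C[OF assms]])
qed

end

theorem lemma2p10:
  fixes \<Omega> :: "(real ^ 'n) set"
    and J \<tau> :: "real ^ 'n \<Rightarrow> real ^ 'n \<Rightarrow> real"
    and S :: "real \<Rightarrow> real"
  assumes "\<Omega> \<noteq> {}" and "bounded \<Omega>" and "connected \<Omega>" and "open \<Omega>"
    and "continuous_on (closure \<Omega> \<times> closure \<Omega>) (\<lambda>(r, r'). J r r')"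
    and "\<forall>k x. ((deriv ^^ k) S) differentiable (at x)"
    and "\<forall>k. bounded (range ((deriv ^^ k) S))"
    and "continuous_on (closure \<Omega> \<times> closure \<Omega>) (\<lambda>(r, r'). \<tau> r r')"
    and "\<forall>r\<in>closure \<Omega>. \<forall>r'\<in>closure \<Omega>. 0 \<le> \<tau> r r'"
    and "\<exists>r\<in>closure \<Omega>. \<exists>r'\<in>closure \<Omega>. \<tau> r r' \<noteq> 0"
    and "h = (SUP p\<in>closure \<Omega> \<times> closure \<Omega>. \<tau> (fst p) (snd p))"
  shows "(\<forall>\<phi>\<in>CX h (closure \<Omega>). nfG J S \<tau> (closure \<Omega>) \<phi> \<in> CY (closure \<Omega>)) \<and>
         (\<forall>\<phi>\<in>CX h (closure \<Omega>).
            frechet_deriv_XY h (closure \<Omega>) (nfG J S \<tau> (closure \<Omega>))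
              (nfDG J S \<tau> (closure \<Omega>) \<phi>) \<phi>)"
proof -
  let ?K = "closure \<Omega>"
  have "compact ?K"
    using assms(2) by (simp add: compact_closure)
  have bdd: "bdd_above ((\<lambda>p. \<tau> (fst p) (snd p)) ` (?K \<times> ?K))"
    using assms(8) \<open>compact ?K\<close>
    by (intro bounded_imp_bdd_above compact_imp_bounded compact_continuous_image compact_Times)
      (simp_all add: case_prod_unfold)
  have "\<tau> r r' \<le> h" if "r \<in> ?K" "r' \<in> ?K" for r r'
    using cSUP_upper[OF _ bdd, of "(r, r')"] that assms(11) by simp
  then interpret delay_integral_operator ?K h J \<tau> S
  proof unfold_locales
    show "\<And>x. (S has_real_derivative deriv S x) (at x)"
      using assms(6)[rule_format, of 0] by (simp add: DERIV_deriv_iff_real_differentiable)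
    show "\<And>x. (deriv S has_real_derivative deriv (deriv S) x) (at x)"
      using assms(6)[rule_format, of 1] by (simp add: DERIV_deriv_iff_real_differentiable)
    show "bounded (range (deriv (deriv S)))"
      using assms(7)[rule_format, of 2] by (simp add: numeral_2_eq_2)
  qed (use assms(1,5,8,9) \<open>compact ?K\<close> in auto)
  show ?thesis
    using nfG_in_CY nfG_frechet_deriv by blast
qed

end
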